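(* Let $(a_{ij})_{1\le i\le v,\,1\le j\le w}$ be a matrix of nonnegative real numbers and let $\rho,\gamma\ge 0$. Put $a_{i\star}=\sum_{j=1}^w a_{ij}$, $a_{\star j}=\sum_{i=1}^v a_{ij}$ and $e=\sum_{i=1}^v\sum_{j=1}^w a_{ij}$. If $a_{i\star}\ge 2\rho$ for all $i$ and $a_{\star j}\ge 2\gamma$ for all $j$, then $$\sum_{i=1}^v\sum_{j=1}^w a_{ij}(a_{i\star}-\rho)(a_{\star j}-\gamma)\ge e\,(e/v-\rho)(e/w-\gamma),$$ with equality exactly if all $a_{i\star}$ are equal to one another and all $a_{\star j}$ are equal to one another. *)

theory Defs
  imports "HOL-Analysis.Analysis"
begin

end

theory Submission
  imports Defs
begin

(* Write r_i, c_j for the row and column sums and M = (e/v - \<rho>) (e/w - \<gamma>). The tangent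
   bound ln z <= ln M + (z - M) / M at z = (r_i - \<rho>) (c_j - \<gamma>), weighted by a_ij and summed,
   gives
     S >= M (sum_i r_i ln (r_i - \<rho>) + sum_j c_j ln (c_j - \<gamma>) + e (1 - ln M)).
   The function x ln (x - \<rho>) is strictly convex on x >= 2 \<rho>: its derivative
   ln (x - \<rho>) + x / (x - \<rho>) has derivative (x - 2 \<rho>) / (x - \<rho>)^2. By Jensen's inequality
   the two sums are at least e ln (e/v - \<rho>) and e ln (e/w - \<gamma>), so the bound is at least e M,
   with equality only if all r_i coincide and all c_j coincide. *)

lemma strict_mono_deriv_imp_gt_tangent:
  fixes f f' :: "real \<Rightarrow> real"
  assumes "connected S"
    and deriv: "\<And>y. y \<in> S \<Longrightarrow> (f has_real_derivative f' y) (at y)"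
    and mono: "strict_mono_on S f'"
    and "x \<in> S" "m \<in> S" "x \<noteq> m"
  shows "f m + f' m * (x - m) < f x"
proof -
  have mvt: "\<exists>z. a < z \<and> z < b \<and> f b - f a = (b - a) * f' z"
    if "a \<in> S" "b \<in> S" "a < b" for a b
    using connected_contains_Icc[OF \<open>connected S\<close> that(1,2)] that(3)
    by (intro MVT2) (auto intro: deriv)
  show ?thesis
  proof (cases "m < x")
    case True
    with mvt obtain z where z: "m < z" "z < x" and eq: "f x - f m = (x - m) * f' z"
      using assms(4,5) by blast
    have "f' m < f' z"
      using connected_contains_Icc[OF \<open>connected S\<close> assms(5,4)] z
      by (intro strict_mono_onD[OF mono]) (auto simp: assms)
    then have "f' m * (x - m) < f' z * (x - m)"
      using True by (intro mult_strict_right_mono) auto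
    with eq show ?thesis by (simp add: algebra_simps)
  next
    case False
    with \<open>x \<noteq> m\<close> have "x < m" by simp
    with mvt obtain z where z: "x < z" "z < m" and eq: "f m - f x = (m - x) * f' z"
      using assms(4,5) by blast
    have "f' z < f' m"
      using connected_contains_Icc[OF \<open>connected S\<close> assms(4,5)] z
      by (intro strict_mono_onD[OF mono]) (auto simp: assms)
    then have "f' z * (m - x) < f' m * (m - x)"
      using \<open>x < m\<close> by (intro mult_strict_right_mono) auto
    with eq show ?thesis by (simp add: algebra_simps)
  qed
qed

lemma strict_mono_on_deriv_mult_ln_diff:
  fixes \<rho> :: real
  assumes "0 \<le> \<rho>"
  shows "strict_mono_on {x. 2 * \<rho> \<le> x \<and> \<rho> < x} (\<lambda>x. ln (x - \<rho>) + x / (x - \<rho>))"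
proof (rule strict_mono_onI)
  fix x y assume "x \<in> {x. 2 * \<rho> \<le> x \<and> \<rho> < x}" "y \<in> {x. 2 * \<rho> \<le> x \<and> \<rho> < x}" "x < y"
  then have x: "2 * \<rho> \<le> x" "\<rho> < x" and "x < y" by auto
  show "ln (x - \<rho>) + x / (x - \<rho>) < ln (y - \<rho>) + y / (y - \<rho>)"
  proof (rule DERIV_pos_imp_increasing_open[OF \<open>x < y\<close>])
    fix z assume "x < z" "z < y"
    with x have z: "2 * \<rho> < z" "\<rho> < z" by auto
    have "((\<lambda>x. ln (x - \<rho>) + x / (x - \<rho>)) has_real_derivative 1 / (z - \<rho>) - \<rho> / (z - \<rho>)\<^sup>2) (at z)"
      using z by (auto intro!: derivative_eq_intros) (simp add: divide_simps power2_eq_square)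
    moreover have "0 < 1 / (z - \<rho>) - \<rho> / (z - \<rho>)\<^sup>2"
      using z \<open>0 \<le> \<rho>\<close> by (simp add: divide_simps power2_eq_square)
    ultimately show "\<exists>d. ((\<lambda>x. ln (x - \<rho>) + x / (x - \<rho>)) has_real_derivative d) (at z) \<and> 0 < d"
      by blast
  next
    show "continuous_on {x..y} (\<lambda>x. ln (x - \<rho>) + x / (x - \<rho>))"
      using x by (intro continuous_intros) auto
  qed
qed

lemma mult_ln_diff_gt_tangent:
  fixes \<rho> m x :: real
  assumes "0 \<le> \<rho>" "2 * \<rho> \<le> m" "0 < m" "2 * \<rho> \<le> x" "x \<noteq> m"
  shows "m * ln (m - \<rho>) + (ln (m - \<rho>) + m / (m - \<rho>)) * (x - m) < x * ln (x - \<rho>)"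
proof (cases "\<rho> < x")
  case True
  let ?S = "{x. 2 * \<rho> \<le> x \<and> \<rho> < x}"
  have "is_interval ?S" by (auto simp: is_interval_1)
  then have "connected ?S" by (rule is_interval_connected)
  moreover have "((\<lambda>x. x * ln (x - \<rho>)) has_real_derivative ln (y - \<rho>) + y / (y - \<rho>)) (at y)"
    if "y \<in> ?S" for y
    using that by (auto intro!: derivative_eq_intros)
  ultimately show ?thesis
    using strict_mono_deriv_imp_gt_tangent[of ?S "\<lambda>x. x * ln (x - \<rho>)",
        OF _ _ strict_mono_on_deriv_mult_ln_diff] assms True by auto
next
  case False
  \<comment> \<open>Only x = \<rho> = 0 remains: there x * ln (x - \<rho>) = 0 (as ln 0 = 0) and the tangent is -m.\<close>
  with assms have "x = 0" "\<rho> = 0" by auto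
  with \<open>0 < m\<close> show ?thesis by simp
qed

lemma le_sum_div_card:
  fixes r :: "'a \<Rightarrow> real"
  assumes "finite I" "I \<noteq> {}" "\<And>i. i \<in> I \<Longrightarrow> b \<le> r i"
  shows "b \<le> sum r I / card I"
proof -
  have "card I * b \<le> sum r I"
    using sum_mono[of I "\<lambda>_. b" r] assms(3) by simp
  moreover have "0 < card I"
    using assms(1,2) by (simp add: card_gt_0_iff)
  ultimately show ?thesis
    by (simp add: field_simps)
qed

lemma less_sum_div_card:
  fixes r :: "'a \<Rightarrow> real"
  assumes "finite I" "0 \<le> \<rho>" "\<And>i. i \<in> I \<Longrightarrow> 2 * \<rho> \<le> r i" "0 < sum r I"
  shows "\<rho> < sum r I / card I"
proof -
  have "I \<noteq> {}"
    using \<open>0 < sum r I\<close> by auto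
  then have "2 * \<rho> \<le> sum r I / card I"
    using assms(1,3) le_sum_div_card by blast
  moreover have "0 < sum r I / card I"
    using assms(1,4) \<open>I \<noteq> {}\<close> by (simp add: card_gt_0_iff)
  ultimately show ?thesis
    using \<open>0 \<le> \<rho>\<close> by linarith
qed

lemma card_mult_le_sum_if_gt_tangent:
  fixes f :: "real \<Rightarrow> real" and r :: "'a \<Rightarrow> real" and m D :: real
  assumes "finite I" and mean: "sum r I = card I * m"
    and above: "\<And>i. i \<in> I \<Longrightarrow> r i \<noteq> m \<Longrightarrow> f m + D * (r i - m) < f (r i)"
  shows "card I * f m \<le> (\<Sum>i\<in>I. f (r i))"
    and "(\<Sum>i\<in>I. f (r i)) = card I * f m \<Longrightarrow> \<forall>i\<in>I. r i = m"
proof -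
  define g where "g i = f (r i) - f m - D * (r i - m)" for i
  have g_nonneg: "0 \<le> g i" if "i \<in> I" for i
    using above[OF that] by (cases "r i = m") (auto simp: g_def)
  have "(\<Sum>i\<in>I. D * (r i - m)) = D * (sum r I - card I * m)"
    by (simp add: sum_subtractf flip: sum_distrib_left)
  then have sum_g: "sum g I = (\<Sum>i\<in>I. f (r i)) - card I * f m"
    by (simp add: g_def sum_subtractf mean)
  then show "card I * f m \<le> (\<Sum>i\<in>I. f (r i))"
    using sum_nonneg[of I g] g_nonneg by simp
  assume "(\<Sum>i\<in>I. f (r i)) = card I * f m"
  with sum_g have "sum g I = 0" by simp
  then have g_zero: "\<forall>i\<in>I. g i = 0"
    using sum_nonneg_eq_0_iff[OF \<open>finite I\<close>] g_nonneg by blast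
  show "\<forall>i\<in>I. r i = m"
  proof (rule ballI, rule ccontr)
    fix i assume "i \<in> I" "r i \<noteq> m"
    then have "0 < g i"
      using above[of i] by (simp add: g_def)
    with g_zero \<open>i \<in> I\<close> show False by simp
  qed
qed

lemma sum_mult_ln_diff_ge:
  fixes r :: "'a \<Rightarrow> real"
  assumes "finite I" "0 \<le> \<rho>" and ge: "\<And>i. i \<in> I \<Longrightarrow> 2 * \<rho> \<le> r i" and "0 < sum r I"
  shows "sum r I * ln (sum r I / card I - \<rho>) \<le> (\<Sum>i\<in>I. r i * ln (r i - \<rho>))"
    and "(\<Sum>i\<in>I. r i * ln (r i - \<rho>)) = sum r I * ln (sum r I / card I - \<rho>)
           \<Longrightarrow> \<forall>i\<in>I. r i = sum r I / card I"
proof -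
  define m where "m = sum r I / card I"
  have "I \<noteq> {}"
    using \<open>0 < sum r I\<close> by auto
  with \<open>finite I\<close> have "card I > 0"
    by (simp add: card_gt_0_iff)
  then have mean: "sum r I = card I * m" and "0 < m"
    using \<open>0 < sum r I\<close> by (simp_all add: m_def)
  have "2 * \<rho> \<le> m"
    unfolding m_def using \<open>finite I\<close> \<open>I \<noteq> {}\<close> ge by (rule le_sum_div_card)
  have tangent: "m * ln (m - \<rho>) + (ln (m - \<rho>) + m / (m - \<rho>)) * (r i - m) < r i * ln (r i - \<rho>)"
    if "i \<in> I" "r i \<noteq> m" for i
    using mult_ln_diff_gt_tangent \<open>0 \<le> \<rho>\<close> \<open>2 * \<rho> \<le> m\<close> \<open>0 < m\<close> ge that by blast
  note jensen = card_mult_le_sum_if_gt_tangent[where f = "\<lambda>x. x * ln (x - \<rho>)",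
      OF \<open>finite I\<close> mean tangent]
  have m_eq: "sum r I / card I = m"
    by (simp add: m_def)
  have mean_value: "sum r I * ln (m - \<rho>) = card I * (m * ln (m - \<rho>))"
    by (simp add: mean mult.assoc)
  show "sum r I * ln (sum r I / card I - \<rho>) \<le> (\<Sum>i\<in>I. r i * ln (r i - \<rho>))"
    unfolding m_eq mean_value by (rule jensen(1))
  show "(\<Sum>i\<in>I. r i * ln (r i - \<rho>)) = sum r I * ln (sum r I / card I - \<rho>)
           \<Longrightarrow> \<forall>i\<in>I. r i = sum r I / card I"
    unfolding m_eq mean_value by (rule jensen(2))
qed

lemma ball_eq_mean_iff_ball_eq:
  fixes r :: "'a \<Rightarrow> real"
  assumes "finite I" "I \<noteq> {}"
  shows "(\<forall>i\<in>I. r i = sum r I / card I) \<longleftrightarrow> (\<forall>i\<in>I. \<forall>i'\<in>I. r i = r i')"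
proof
  assume const: "\<forall>i\<in>I. \<forall>i'\<in>I. r i = r i'"
  show "\<forall>i\<in>I. r i = sum r I / card I"
  proof
    fix i assume "i \<in> I"
    have "sum r I = (\<Sum>i'\<in>I. r i)"
      by (intro sum.cong refl) (use const \<open>i \<in> I\<close> in blast)
    with assms show "r i = sum r I / card I" by simp
  qed
qed metis

definition row_sum :: "('a \<Rightarrow> 'b \<Rightarrow> real) \<Rightarrow> 'b set \<Rightarrow> 'a \<Rightarrow> real" where
  "row_sum a J i = (\<Sum>j\<in>J. a i j)"

definition col_sum :: "('a \<Rightarrow> 'b \<Rightarrow> real) \<Rightarrow> 'a set \<Rightarrow> 'b \<Rightarrow> real" where
  "col_sum a I j = (\<Sum>i\<in>I. a i j)"

lemma sum_row_sum: "(\<Sum>i\<in>I. row_sum a J i) = (\<Sum>i\<in>I. \<Sum>j\<in>J. a i j)"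
  by (simp add: row_sum_def)

lemma sum_col_sum: "(\<Sum>j\<in>J. col_sum a I j) = (\<Sum>i\<in>I. \<Sum>j\<in>J. a i j)"
  unfolding col_sum_def by (rule sum.swap)

lemma sum_mult_row_col_sums_ge_ln:
  fixes a :: "'a \<Rightarrow> 'b \<Rightarrow> real" and x y \<rho> \<gamma> :: real
  assumes "finite I" "finite J"
    and nonneg: "\<And>i j. i \<in> I \<Longrightarrow> j \<in> J \<Longrightarrow> 0 \<le> a i j"
    and "0 \<le> \<rho>" "0 \<le> \<gamma>"
    and row: "\<And>i. i \<in> I \<Longrightarrow> 2 * \<rho> \<le> row_sum a J i"
    and col: "\<And>j. j \<in> J \<Longrightarrow> 2 * \<gamma> \<le> col_sum a I j"
    and "\<rho> < x" "\<gamma> < y"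
  defines "e \<equiv> \<Sum>i\<in>I. \<Sum>j\<in>J. a i j"
  shows "e * (x - \<rho>) * (y - \<gamma>) + (x - \<rho>) * (y - \<gamma>) *
           (((\<Sum>i\<in>I. row_sum a J i * ln (row_sum a J i - \<rho>)) - e * ln (x - \<rho>))
            + ((\<Sum>j\<in>J. col_sum a I j * ln (col_sum a I j - \<gamma>)) - e * ln (y - \<gamma>)))
         \<le> (\<Sum>i\<in>I. \<Sum>j\<in>J. a i j * (row_sum a J i - \<rho>) * (col_sum a I j - \<gamma>))"
proof -
  define r c where "r = row_sum a J" and "c = col_sum a I"
  define L K where "L i = ln (r i - \<rho>)" and "K j = ln (c j - \<gamma>)" for i j
  define M where "M = (x - \<rho>) * (y - \<gamma>)"
  have "0 < M" and ln_M: "ln M = ln (x - \<rho>) + ln (y - \<gamma>)"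
    using \<open>\<rho> < x\<close> \<open>\<gamma> < y\<close> by (simp_all add: M_def ln_mult_pos)
  have pointwise: "a i j * (M * (L i + K j - ln M + 1)) \<le> a i j * (r i - \<rho>) * (c j - \<gamma>)"
    if "i \<in> I" "j \<in> J" for i j
  proof (cases "a i j = 0")
    case False
    with nonneg that have "0 < a i j" by (simp add: order_less_le)
    moreover have "a i j \<le> r i" "a i j \<le> c j"
      unfolding r_def c_def row_sum_def col_sum_def
      using nonneg that \<open>finite I\<close> \<open>finite J\<close> by (auto intro: member_le_sum)
    ultimately have "0 < r i - \<rho>" "0 < c j - \<gamma>"
      using row[OF that(1)] col[OF that(2)] \<open>0 \<le> \<rho>\<close> \<open>0 \<le> \<gamma>\<close> by (auto simp: r_def c_def)
    then have "L i + K j - ln M \<le> ((r i - \<rho>) * (c j - \<gamma>) - M) / M"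
      using ln_diff_le[of "(r i - \<rho>) * (c j - \<gamma>)" M] \<open>0 < M\<close> by (simp add: L_def K_def ln_mult)
    then have "M * (L i + K j - ln M + 1) \<le> (r i - \<rho>) * (c j - \<gamma>)"
      using \<open>0 < M\<close> by (simp add: field_simps)
    with \<open>0 < a i j\<close> show ?thesis
      by (simp add: mult.assoc mult_left_mono)
  qed simp
  have split: "a i j * (M * (L i + K j - ln M + 1))
      = M * (a i j * L i) + M * (a i j * K j) + M * (a i j * (1 - ln M))" for i j
    by (simp add: algebra_simps)
  have row_part: "(\<Sum>i\<in>I. \<Sum>j\<in>J. a i j * L i) = (\<Sum>i\<in>I. r i * L i)"
    by (simp add: r_def row_sum_def sum_distrib_right)
  have col_part: "(\<Sum>i\<in>I. \<Sum>j\<in>J. a i j * K j) = (\<Sum>j\<in>J. c j * K j)"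
    unfolding c_def col_sum_def sum_distrib_right by (rule sum.swap)
  have "e * M + M * (((\<Sum>i\<in>I. r i * L i) - e * ln (x - \<rho>)) + ((\<Sum>j\<in>J. c j * K j) - e * ln (y - \<gamma>)))
      = M * ((\<Sum>i\<in>I. r i * L i) + (\<Sum>j\<in>J. c j * K j) + e * (1 - ln M))"
    by (simp add: ln_M algebra_simps)
  also have "\<dots> = (\<Sum>i\<in>I. \<Sum>j\<in>J. a i j * (M * (L i + K j - ln M + 1)))"
    unfolding split row_part[symmetric] col_part[symmetric] e_def
    by (simp add: sum.distrib distrib_left flip: sum_distrib_left sum_distrib_right)
  also have "\<dots> \<le> (\<Sum>i\<in>I. \<Sum>j\<in>J. a i j * (r i - \<rho>) * (c j - \<gamma>))"
    using pointwise by (intro sum_mono) auto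
  finally show ?thesis by (simp add: r_def c_def L_def K_def M_def mult.assoc)
qed

lemma sum_mult_row_col_sums_const:
  fixes a :: "'a \<Rightarrow> 'b \<Rightarrow> real"
  assumes "\<And>i. i \<in> I \<Longrightarrow> row_sum a J i = x" and "\<And>j. j \<in> J \<Longrightarrow> col_sum a I j = y"
  shows "(\<Sum>i\<in>I. \<Sum>j\<in>J. a i j * (row_sum a J i - \<rho>) * (col_sum a I j - \<gamma>))
       = (\<Sum>i\<in>I. \<Sum>j\<in>J. a i j) * (x - \<rho>) * (y - \<gamma>)"
  using assms by (simp add: sum_distrib_right)

lemma sum_mult_row_col_sums_ge_of_pos:
  fixes a :: "'a \<Rightarrow> 'b \<Rightarrow> real" and \<rho> \<gamma> :: real
  assumes "finite I" "finite J"
    and nonneg: "\<And>i j. i \<in> I \<Longrightarrow> j \<in> J \<Longrightarrow> 0 \<le> a i j"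
    and "0 \<le> \<rho>" "0 \<le> \<gamma>"
    and row: "\<And>i. i \<in> I \<Longrightarrow> 2 * \<rho> \<le> row_sum a J i"
    and col: "\<And>j. j \<in> J \<Longrightarrow> 2 * \<gamma> \<le> col_sum a I j"
  defines "e \<equiv> \<Sum>i\<in>I. \<Sum>j\<in>J. a i j"
    and "S \<equiv> \<Sum>i\<in>I. \<Sum>j\<in>J. a i j * (row_sum a J i - \<rho>) * (col_sum a I j - \<gamma>)"
  assumes "0 < e"
  shows "e * (e / card I - \<rho>) * (e / card J - \<gamma>) \<le> S"
    and "S = e * (e / card I - \<rho>) * (e / card J - \<gamma>) \<Longrightarrow>
           (\<forall>i\<in>I. row_sum a J i = e / card I) \<and> (\<forall>j\<in>J. col_sum a I j = e / card J)"
proof -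
  define r c where "r = row_sum a J" and "c = col_sum a I"
  define mI mJ where "mI = e / card I" and "mJ = e / card J"
  have e_r: "sum r I = e" and e_c: "sum c J = e"
    by (simp_all add: r_def c_def e_def sum_row_sum sum_col_sum)
  have row_r: "2 * \<rho> \<le> r i" if "i \<in> I" for i
    using row[OF that] by (simp add: r_def)
  have col_c: "2 * \<gamma> \<le> c j" if "j \<in> J" for j
    using col[OF that] by (simp add: c_def)
  have "\<rho> < mI"
    unfolding mI_def e_r[symmetric]
    using \<open>finite I\<close> \<open>0 \<le> \<rho>\<close> row_r \<open>0 < e\<close>[folded e_r] by (rule less_sum_div_card)
  have "\<gamma> < mJ"
    unfolding mJ_def e_c[symmetric]
    using \<open>finite J\<close> \<open>0 \<le> \<gamma>\<close> col_c \<open>0 < e\<close>[folded e_c] by (rule less_sum_div_card)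
  define M where "M = (mI - \<rho>) * (mJ - \<gamma>)"
  have "0 < M"
    using \<open>\<rho> < mI\<close> \<open>\<gamma> < mJ\<close> by (simp add: M_def)
  define A B where "A = (\<Sum>i\<in>I. r i * ln (r i - \<rho>))" and "B = (\<Sum>j\<in>J. c j * ln (c j - \<gamma>))"
  have gap: "e * (mI - \<rho>) * (mJ - \<gamma>) + M * ((A - e * ln (mI - \<rho>)) + (B - e * ln (mJ - \<gamma>))) \<le> S"
    using sum_mult_row_col_sums_ge_ln[OF \<open>finite I\<close> \<open>finite J\<close> nonneg \<open>0 \<le> \<rho>\<close> \<open>0 \<le> \<gamma>\<close> row col
        \<open>\<rho> < mI\<close> \<open>\<gamma> < mJ\<close>]
    unfolding M_def A_def B_def S_def e_def r_def c_def .
  have jensen_row: "e * ln (mI - \<rho>) \<le> A" "A = e * ln (mI - \<rho>) \<Longrightarrow> \<forall>i\<in>I. r i = mI"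
    unfolding A_def mI_def e_r[symmetric]
    by (rule sum_mult_ln_diff_ge; use \<open>finite I\<close> \<open>0 \<le> \<rho>\<close> row_r \<open>0 < e\<close> e_r in simp)+
  have jensen_col: "e * ln (mJ - \<gamma>) \<le> B" "B = e * ln (mJ - \<gamma>) \<Longrightarrow> \<forall>j\<in>J. c j = mJ"
    unfolding B_def mJ_def e_c[symmetric]
    by (rule sum_mult_ln_diff_ge; use \<open>finite J\<close> \<open>0 \<le> \<gamma>\<close> col_c \<open>0 < e\<close> e_c in simp)+
  have "0 \<le> M * ((A - e * ln (mI - \<rho>)) + (B - e * ln (mJ - \<gamma>)))"
    using jensen_row(1) jensen_col(1) \<open>0 < M\<close> by simp
  with gap show "e * (e / card I - \<rho>) * (e / card J - \<gamma>) \<le> S"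
    unfolding mI_def mJ_def by linarith
  assume "S = e * (e / card I - \<rho>) * (e / card J - \<gamma>)"
  with gap have "M * ((A - e * ln (mI - \<rho>)) + (B - e * ln (mJ - \<gamma>))) \<le> 0"
    unfolding mI_def mJ_def by linarith
  with \<open>0 < M\<close> have "(A - e * ln (mI - \<rho>)) + (B - e * ln (mJ - \<gamma>)) \<le> 0"
    by (simp add: mult_le_0_iff)
  with jensen_row(1) jensen_col(1) have "A = e * ln (mI - \<rho>)" "B = e * ln (mJ - \<gamma>)"
    by linarith+
  with jensen_row(2) jensen_col(2) show
    "(\<forall>i\<in>I. row_sum a J i = e / card I) \<and> (\<forall>j\<in>J. col_sum a I j = e / card J)"
    unfolding r_def c_def mI_def mJ_def by blast
qed

theorem sum_mult_row_col_sums_ge: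
  fixes a :: "'a \<Rightarrow> 'b \<Rightarrow> real" and \<rho> \<gamma> :: real
  assumes "finite I" "finite J" "I \<noteq> {}" "J \<noteq> {}"
    and nonneg: "\<And>i j. i \<in> I \<Longrightarrow> j \<in> J \<Longrightarrow> 0 \<le> a i j"
    and "0 \<le> \<rho>" "0 \<le> \<gamma>"
    and row: "\<And>i. i \<in> I \<Longrightarrow> 2 * \<rho> \<le> row_sum a J i"
    and col: "\<And>j. j \<in> J \<Longrightarrow> 2 * \<gamma> \<le> col_sum a I j"
  defines "e \<equiv> \<Sum>i\<in>I. \<Sum>j\<in>J. a i j"
    and "S \<equiv> \<Sum>i\<in>I. \<Sum>j\<in>J. a i j * (row_sum a J i - \<rho>) * (col_sum a I j - \<gamma>)"
  shows "e * (e / card I - \<rho>) * (e / card J - \<gamma>) \<le> S" (is "?R \<le> S")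
    and "S = e * (e / card I - \<rho>) * (e / card J - \<gamma>) \<longleftrightarrow>
           (\<forall>i\<in>I. \<forall>i'\<in>I. row_sum a J i = row_sum a J i') \<and>
           (\<forall>j\<in>J. \<forall>j'\<in>J. col_sum a I j = col_sum a I j')" (is "_ \<longleftrightarrow> ?const")
proof -
  define balanced where
    "balanced \<longleftrightarrow> (\<forall>i\<in>I. row_sum a J i = e / card I) \<and> (\<forall>j\<in>J. col_sum a I j = e / card J)"
  have balanced_iff: "balanced \<longleftrightarrow> ?const"
    unfolding balanced_def e_def
    using ball_eq_mean_iff_ball_eq[OF \<open>finite I\<close> \<open>I \<noteq> {}\<close>, of "row_sum a J"]
      ball_eq_mean_iff_ball_eq[OF \<open>finite J\<close> \<open>J \<noteq> {}\<close>, of "col_sum a I"]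
    by (simp add: sum_row_sum sum_col_sum)
  have eq_if_balanced: "S = ?R" if balanced
    unfolding S_def e_def
    by (rule sum_mult_row_col_sums_const) (use that in \<open>unfold balanced_def e_def, blast+\<close>)
  have "0 \<le> e"
    unfolding e_def using nonneg by (intro sum_nonneg) auto
  have "?R \<le> S \<and> (S = ?R \<longrightarrow> balanced)"
  proof (cases "e = 0")
    case True
    have "0 \<le> row_sum a J i" if "i \<in> I" for i
      using nonneg that by (auto simp: row_sum_def intro: sum_nonneg)
    moreover have "0 \<le> col_sum a I j" if "j \<in> J" for j
      using nonneg that by (auto simp: col_sum_def intro: sum_nonneg)
    moreover have "sum (row_sum a J) I = 0" "sum (col_sum a I) J = 0"
      using True by (simp_all add: e_def sum_row_sum sum_col_sum)
    ultimately have "\<forall>i\<in>I. row_sum a J i = 0" "\<forall>j\<in>J. col_sum a I j = 0"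
      by (simp_all add: sum_nonneg_eq_0_iff[OF \<open>finite I\<close>] sum_nonneg_eq_0_iff[OF \<open>finite J\<close>])
    with True have balanced
      unfolding balanced_def by simp
    with eq_if_balanced show ?thesis by simp
  next
    case False
    with \<open>0 \<le> e\<close> have "0 < e" by simp
    then show ?thesis
      using sum_mult_row_col_sums_ge_of_pos[OF assms(1,2) nonneg \<open>0 \<le> \<rho>\<close> \<open>0 \<le> \<gamma>\<close> row col]
      unfolding balanced_def e_def S_def by blast
  qed
  with eq_if_balanced balanced_iff show "?R \<le> S" and "S = ?R \<longleftrightarrow> ?const"
    by blast+
qed

theorem theorem4p4:
  fixes a :: "nat \<Rightarrow> nat \<Rightarrow> real" and v w :: nat and \<rho> \<gamma> :: real
  assumes "v \<ge> 1" and "w \<ge> 1"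
    and nonneg: "\<And>i j. i \<in> {1..v} \<Longrightarrow> j \<in> {1..w} \<Longrightarrow> a i j \<ge> 0"
    and "\<rho> \<ge> 0" and "\<gamma> \<ge> 0"
    and row: "\<And>i. i \<in> {1..v} \<Longrightarrow> (\<Sum>j=1..w. a i j) \<ge> 2 * \<rho>"
    and col: "\<And>j. j \<in> {1..w} \<Longrightarrow> (\<Sum>i=1..v. a i j) \<ge> 2 * \<gamma>"
  shows "(let e = (\<Sum>i=1..v. \<Sum>j=1..w. a i j);
              S = (\<Sum>i=1..v. \<Sum>j=1..w.
                     a i j * ((\<Sum>l=1..w. a i l) - \<rho>) * ((\<Sum>k=1..v. a k j) - \<gamma>));
              R = e * (e / real v - \<rho>) * (e / real w - \<gamma>)
          in S \<ge> R \<and>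
             (S = R \<longleftrightarrow>
                ((\<forall>i\<in>{1..v}. \<forall>i'\<in>{1..v}. (\<Sum>j=1..w. a i j) = (\<Sum>j=1..w. a i' j)) \<and>
                 (\<forall>j\<in>{1..w}. \<forall>j'\<in>{1..w}. (\<Sum>i=1..v. a i j) = (\<Sum>i=1..v. a i j')))))"
proof -
  have "{1..v} \<noteq> {}" "{1..w} \<noteq> {}"
    using \<open>v \<ge> 1\<close> \<open>w \<ge> 1\<close> by auto
  note main = sum_mult_row_col_sums_ge[of "{1..v}" "{1..w}" a \<rho> \<gamma>,
      unfolded row_sum_def col_sum_def card_atLeastAtMost,
      OF finite_atLeastAtMost finite_atLeastAtMost this nonneg \<open>\<rho> \<ge> 0\<close> \<open>\<gamma> \<ge> 0\<close> row col]
  show ?thesis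
    unfolding Let_def using main by simp
qed

end
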